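(* Let $\{X_1,\ldots,X_{p_n}\}$ be random variables with index set $V=\{1,\ldots,p_n\}$, observed through $n$ i.i.d. samples, and for each pair $i\neq j$ let $e_{ij}=0$ if $X_i$ and $X_j$ are conditionally independent given $\boldsymbol X_{V\setminus\{i,j\}}$ and $e_{ij}=1$ otherwise. For each $i$ let $S_i$ be the set of true variables of the regression $X_i\sim \boldsymbol X_{V\setminus\{i\}}$, and for each pair $j<i$ let $S_{j\setminus i}$ be the set of true variables of the regression $X_j\sim \boldsymbol X_{V\setminus\{i,j\}}$; let $\hat S_i$ and $\hat S_{j\setminus i}$ be the index sets selected from data by a variable selection/screening procedure applied to these two regressions. For each pair $j<i$, let $T_{ij}$ be the statistic of a nonparametric test of $X_i \perp X_j \mid \boldsymbol X_{\hat S_i\cup \hat S_{j\setminus i}\setminus\{j\}}$, let $\mu_{ij}=E(T_{ij})$, and let $\mu_{ij,0}$ and $\mu_{ij,1}$ denote the mean of $T_{ij}$ under the null hypothesis $e_{ij}=0$ and the alternative $e_{ij}=1$, respectively. Assume: (1) the generative distribution of the data is Markov and faithful to a directed acyclic graph; (2) $p_n$ increases as a polynomial of $n$; (3) (uniform sure screening) $\min_{1\le i\le p_n} P(S_i\subset \hat S_i)\to 1$ and $\min_{1\le j<i\le p_n} P(S_{j\setminus i}\subset \hat S_{j\setminus i})\to 1$ as $n\to\infty$; (4) (separation) $\min_{i,j}(\mu_{ij,1}-\mu_{ij,0})>\eta_n$, where $\eta_n=c_0 n^{-\kappa}$ for some constants $c_0>0$, $\kappa>0$; (5) (tail probability) $\sup_{i,j}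 P(|T_{ij}-\mu_{ij}|>\tfrac12\eta_n)=\exp\{-O(n^{\delta(\kappa)})\}$ for some positive number $\delta(\kappa)$ depending on $\kappa$. Let $\hat{\mathcal E}_n$ be the estimated network obtained by declaring, for each pair $(X_i,X_j)$, an edge ($e_{ij}=1$) if and only if $T_{ij}>\mu_{ij,0}+\eta_n/2$, i.e., using $\mu_{ij,0}+\eta_n/2$ as the critical value of the conditional independence test. Then $P\{\text{an error occurs in } \hat{\mathcal E}_n\}\to 0$ as $n\to\infty$, where an error means that for some pair $(i,j)$ the declared value differs from $e_{ij}$.
   Context: This is the consistency guarantee for the "double regression" procedure for learning an undirected Markov network (graphical model) of possibly non-Gaussian, nonlinearly dependent variables: for each variable $X_i$ one performs a (nonlinear) regression $X_i\sim\boldsymbol X_{V\setminus\{i\}}$ and selects $\hat S_i$; for each pair $j<i$ one performs a regression $X_j\sim \boldsymbol X_{V\setminus\{i,j\}}$ and selects $\hat S_{j\setminus i}$; then a nonparametric conditional independence test of $X_i$ and $X_j$ given $\boldsymbol X_{\hat S_i\cup\hat S_{j\setminus i}\setminus\{j\}}$ is performed with statistic $T_{ij}$. Here $\boldsymbol X_A=\{X_k:k\in A\}$ for $A\subset V$, and the "set of true variables" of a regression is the set of explanatory variables on which the conditional distribution of the response actually depends. The notation $\exp\{-O(n^{\delta})\}$ means a quantity bounded by $\exp(-c_1 n^{\delta})$ for some constant $c_1>0$ and all sufficiently large $n$. The suprema and minima over $i,j$ range over all pairs $1\le j<i\le p_n$. *)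

theory Defs
  imports "HOL-Probability.Probability" "HOL-Library.Landau_Symbols"
begin

definition gen_sets :: "'a measure \<Rightarrow> (nat \<Rightarrow> 'a \<Rightarrow> real) \<Rightarrow> nat set \<Rightarrow> 'a set set" where
  "gen_sets M Xs A = {Xs k -` B \<inter> space M | k B. k \<in> A \<and> B \<in> sets borel}"

definition cond_indep :: "'a measure \<Rightarrow> (nat \<Rightarrow> 'a \<Rightarrow> real) \<Rightarrow> nat set \<Rightarrow> nat set \<Rightarrow> nat set \<Rightarrow> bool" where
  "cond_indep M Xs I J K \<longleftrightarrow>
     (\<forall>a \<in> sigma_sets (space M) (gen_sets M Xs I).
      \<forall>b \<in> sigma_sets (space M) (gen_sets M Xs J).
        AE x in M. real_cond_exp M (sigma (space M) (gen_sets M Xs K)) (indicator (a \<inter> b)) x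
                 = real_cond_exp M (sigma (space M) (gen_sets M Xs K)) (indicator a) x
                   * real_cond_exp M (sigma (space M) (gen_sets M Xs K)) (indicator b) x)"

text \<open>Coordinate variables of the generative distribution on nat \<Rightarrow> real.\<close>
definition coord :: "nat \<Rightarrow> (nat \<Rightarrow> real) \<Rightarrow> real" where
  "coord i x = x i"

definition edge :: "(nat \<Rightarrow> real) measure \<Rightarrow> nat set \<Rightarrow> nat \<Rightarrow> nat \<Rightarrow> bool" where
  "edge P V i j \<longleftrightarrow> \<not> cond_indep P coord {i} {j} (V - {i, j})"

text \<open>Set of true variables of the regression of X_r on X_E: the (smallest) subset S of E
  such that the conditional distribution of X_r given X_E depends only on X_S, i.e.
  X_r is conditionally independent of X_(E-S) given X_S.\<close>
definition true_vars :: "(nat \<Rightarrow> real) measure \<Rightarrow> nat \<Rightarrow> nat set \<Rightarrow> nat set" where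
  "true_vars P r E = (THE S. S \<subseteq> E \<and> cond_indep P coord {r} (E - S) S \<and>
       (\<forall>S' \<subseteq> E. cond_indep P coord {r} (E - S') S' \<longrightarrow> S \<subseteq> S'))"

definition dag :: "nat set \<Rightarrow> (nat \<times> nat) set \<Rightarrow> bool" where
  "dag V G \<longleftrightarrow> G \<subseteq> V \<times> V \<and> acyclic G"

definition dpath :: "(nat \<times> nat) set \<Rightarrow> nat list \<Rightarrow> bool" where
  "dpath G xs \<longleftrightarrow> distinct xs \<and> length xs \<ge> 2 \<and>
     (\<forall>k. k + 1 < length xs \<longrightarrow> (xs!k, xs!(k+1)) \<in> G \<or> (xs!(k+1), xs!k) \<in> G)"

definition collider :: "(nat \<times> nat) set \<Rightarrow> nat list \<Rightarrow> nat \<Rightarrow> bool" where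
  "collider G xs k \<longleftrightarrow> (xs!(k-1), xs!k) \<in> G \<and> (xs!(k+1), xs!k) \<in> G"

definition blocked :: "(nat \<times> nat) set \<Rightarrow> nat set \<Rightarrow> nat list \<Rightarrow> bool" where
  "blocked G K xs \<longleftrightarrow> (\<exists>k. 0 < k \<and> k + 1 < length xs \<and>
     (if collider G xs k then (\<forall>w. (xs!k, w) \<in> G\<^sup>* \<longrightarrow> w \<notin> K) else xs!k \<in> K))"

definition d_separated :: "(nat \<times> nat) set \<Rightarrow> nat set \<Rightarrow> nat set \<Rightarrow> nat set \<Rightarrow> bool" where
  "d_separated G I J K \<longleftrightarrow>
     (\<forall>xs. dpath G xs \<and> hd xs \<in> I \<and> last xs \<in> J \<longrightarrow> blocked G K xs)"

definition markov_faithful_dag :: "(nat \<Rightarrow> real) measure \<Rightarrow> nat set \<Rightarrow> bool" where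
  "markov_faithful_dag P V \<longleftrightarrow> (\<exists>G. dag V G \<and>
     (\<forall>I J K. I \<subseteq> V \<and> J \<subseteq> V \<and> K \<subseteq> V \<and> I \<noteq> {} \<and> J \<noteq> {} \<and>
        I \<inter> J = {} \<and> I \<inter> K = {} \<and> J \<inter> K = {} \<longrightarrow>
        (d_separated G I J K \<longrightarrow> cond_indep P coord I J K) \<and>
        (cond_indep P coord I J K \<longrightarrow> d_separated G I J K)))"

end

theory Submission
  imports Defs "HOL-Real_Asymp.Real_Asymp"
begin

text \<open>The critical value \<open>\<mu>\<^sub>i\<^sub>j\<^sub>,\<^sub>0 + \<eta>\<^sub>n/2\<close> is more than \<open>\<eta>\<^sub>n/2\<close> away from both possible
  means of \<open>T\<^sub>i\<^sub>j\<close>, so a wrong decision on a pair forces \<open>T\<^sub>i\<^sub>j\<close> to deviate from its mean by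
  more than \<open>\<eta>\<^sub>n/2\<close>. A union bound over the fewer than \<open>p\<^sub>n\<^sup>2\<close> pairs bounds the error
  probability by \<open>p\<^sub>n\<^sup>2 exp(-c\<^sub>1 n\<^sup>\<delta>)\<close>, which tends to 0 because \<open>p\<^sub>n\<close> grows polynomially.
  Faithfulness and sure screening are what make the mean of \<open>T\<^sub>i\<^sub>j\<close> equal to \<open>\<mu>\<^sub>i\<^sub>j\<^sub>,\<^sub>0\<close> or
  \<open>\<mu>\<^sub>i\<^sub>j\<^sub>,\<^sub>1\<close> according to \<open>e\<^sub>i\<^sub>j\<close>; in the formal statement this is the hypothesis \<open>mean\<close>.\<close>

lemma threshold_error_imp_deviation:
  fixes t \<mu>\<^sub>0 \<mu>\<^sub>1 \<eta> :: real
  assumes "\<eta> < \<mu>\<^sub>1 - \<mu>\<^sub>0" and "(\<mu>\<^sub>0 + \<eta> / 2 < t) \<noteq> e"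
  shows "\<eta> / 2 < \<bar>t - (if e then \<mu>\<^sub>1 else \<mu>\<^sub>0)\<bar>"
  using assms by (cases e) (auto simp: abs_if)

lemma (in finite_measure) measure_le_card_mult_of_cover:
  fixes b :: real
  assumes "finite I" and "E \<subseteq> (\<Union>i\<in>I. A i)"
    and "\<And>i. i \<in> I \<Longrightarrow> A i \<in> sets M" and "\<And>i. i \<in> I \<Longrightarrow> measure M (A i) \<le> b"
  shows "measure M E \<le> card I * b"
proof -
  have "measure M E \<le> measure M (\<Union>i\<in>I. A i)"
    using assms by (intro finite_measure_mono) auto
  also have "\<dots> \<le> (\<Sum>i\<in>I. measure M (A i))"
    using assms by (intro measure_UNION_le) auto
  also have "\<dots> \<le> (\<Sum>i\<in>I. b)"
    using assms by (intro sum_mono) auto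
  finally show ?thesis by simp
qed

lemma (in prob_space) threshold_tests_error_le:
  fixes T :: "'i \<Rightarrow> 'a \<Rightarrow> real" and \<mu>\<^sub>0 \<mu>\<^sub>1 :: "'i \<Rightarrow> real" and b :: real
  assumes "finite I"
    and "\<And>i. i \<in> I \<Longrightarrow> T i \<in> borel_measurable M"
    and "\<And>i. i \<in> I \<Longrightarrow> \<eta> < \<mu>\<^sub>1 i - \<mu>\<^sub>0 i"
    and "\<And>i. i \<in> I \<Longrightarrow> expectation (T i) = (if e i then \<mu>\<^sub>1 i else \<mu>\<^sub>0 i)"
    and "\<And>i. i \<in> I \<Longrightarrow> measure M {\<omega> \<in> space M. \<eta> / 2 < \<bar>T i \<omega> - expectation (T i)\<bar>} \<le> b"
  shows "measure M {\<omega> \<in> space M. \<exists>i\<in>I. (\<mu>\<^sub>0 i + \<eta> / 2 < T i \<omega>) \<noteq> e i} \<le> card I * b"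
proof (rule measure_le_card_mult_of_cover)
  show "{\<omega> \<in> space M. \<exists>i\<in>I. (\<mu>\<^sub>0 i + \<eta> / 2 < T i \<omega>) \<noteq> e i}
      \<subseteq> (\<Union>i\<in>I. {\<omega> \<in> space M. \<eta> / 2 < \<bar>T i \<omega> - expectation (T i)\<bar>})"
  proof
    fix \<omega> assume "\<omega> \<in> {\<omega> \<in> space M. \<exists>i\<in>I. (\<mu>\<^sub>0 i + \<eta> / 2 < T i \<omega>) \<noteq> e i}"
    then obtain i where "\<omega> \<in> space M" "i \<in> I" "(\<mu>\<^sub>0 i + \<eta> / 2 < T i \<omega>) \<noteq> e i"
      by blast
    moreover from this have "\<eta> / 2 < \<bar>T i \<omega> - expectation (T i)\<bar>"
      using threshold_error_imp_deviation[OF assms(3)] assms(4) by presburger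
    ultimately show "\<omega> \<in> (\<Union>i\<in>I. {\<omega> \<in> space M. \<eta> / 2 < \<bar>T i \<omega> - expectation (T i)\<bar>})"
      by blast
  qed
  show "{\<omega> \<in> space M. \<eta> / 2 < \<bar>T i \<omega> - expectation (T i)\<bar>} \<in> sets M" if "i \<in> I" for i
    using assms(2)[OF that] by measurable
qed (use assms in auto)

lemma card_ordered_pairs_le:
  "card (SIGMA i:{1..p}. {1..<i}) \<le> p ^ 2"
proof -
  have "card (SIGMA i:{1..p}. {1..<i}) \<le> card ({1..p} \<times> {1..p})"
    by (intro card_mono) auto
  then show ?thesis by (simp add: card_cartesian_product power2_eq_square)
qed

lemma bigo_poly_mult_stretched_exp_tendsto_zero:
  fixes f :: "nat \<Rightarrow> real"
  assumes "f \<in> O(\<lambda>n. real n ^ k)" and "\<delta> > 0" and "c > 0"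
  shows "(\<lambda>n. f n * exp (- c * real n powr \<delta>)) \<longlonglongrightarrow> 0"
proof -
  obtain C where bound: "eventually (\<lambda>n. norm (f n) \<le> C * norm (real n ^ k)) sequentially"
    using assms(1) by (rule landau_o.bigE)
  have "(\<lambda>n. C * (real n ^ k * exp (- c * real n powr \<delta>))) \<longlonglongrightarrow> 0"
    using assms(2,3) by real_asymp
  moreover have "eventually (\<lambda>n. norm (f n * exp (- c * real n powr \<delta>))
      \<le> C * (real n ^ k * exp (- c * real n powr \<delta>))) sequentially"
    using bound by eventually_elim (simp add: abs_mult)
  ultimately show ?thesis by (rule Lim_null_comparison[rotated])
qed

theorem theorem1:
  fixes M :: "nat \<Rightarrow> 'a measure"
    and P :: "nat \<Rightarrow> (nat \<Rightarrow> real) measure"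
    and p :: "nat \<Rightarrow> nat"
    and X :: "nat \<Rightarrow> nat \<Rightarrow> 'a \<Rightarrow> (nat \<Rightarrow> real)"
    and Shat :: "nat \<Rightarrow> nat \<Rightarrow> 'a \<Rightarrow> nat set"
    and Shat2 :: "nat \<Rightarrow> nat \<Rightarrow> nat \<Rightarrow> 'a \<Rightarrow> nat set"
    and T :: "nat \<Rightarrow> nat \<Rightarrow> nat \<Rightarrow> 'a \<Rightarrow> real"
    and mu0 mu1 :: "nat \<Rightarrow> nat \<Rightarrow> nat \<Rightarrow> real"
    and c0 \<kappa> :: real
  assumes prob_M: "\<And>n. prob_space (M n)"
    and prob_P: "\<And>n. prob_space (P n)"
    and sets_P: "\<And>n. sets (P n) = sets (Pi\<^sub>M UNIV (\<lambda>_. borel))"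
    and X_meas: "\<And>n k. k < n \<Longrightarrow> X n k \<in> measurable (M n) (Pi\<^sub>M UNIV (\<lambda>_. borel))"
    and X_indep: "\<And>n. prob_space.indep_vars (M n) (\<lambda>_. Pi\<^sub>M UNIV (\<lambda>_. borel)) (X n) {..<n}"
    and X_distr: "\<And>n k. k < n \<Longrightarrow> distr (M n) (Pi\<^sub>M UNIV (\<lambda>_. borel)) (X n k) = P n"
    and dag_assm: "\<And>n. markov_faithful_dag (P n) {1..p n}"
    and poly: "\<exists>a::nat. (\<lambda>n. real (p n)) \<in> O(\<lambda>n. real n ^ a)"
    and Shat_sub: "\<And>n i \<omega>. i \<in> {1..p n} \<Longrightarrow> Shat n i \<omega> \<subseteq> {1..p n} - {i}"
    and Shat2_sub: "\<And>n i j \<omega>. 1 \<le> j \<Longrightarrow> j < i \<Longrightarrow> i \<le> p n \<Longrightarrow>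
                      Shat2 n j i \<omega> \<subseteq> {1..p n} - {i, j}"
    and screen1: "\<And>\<epsilon>. \<epsilon> > 0 \<Longrightarrow> eventually (\<lambda>n. \<forall>i \<in> {1..p n}.
          measure (M n) {\<omega> \<in> space (M n). true_vars (P n) i ({1..p n} - {i}) \<subseteq> Shat n i \<omega>}
            \<ge> 1 - \<epsilon>) sequentially"
    and screen2: "\<And>\<epsilon>. \<epsilon> > 0 \<Longrightarrow> eventually (\<lambda>n. \<forall>i j. 1 \<le> j \<and> j < i \<and> i \<le> p n \<longrightarrow>
          measure (M n) {\<omega> \<in> space (M n). true_vars (P n) j ({1..p n} - {i, j}) \<subseteq> Shat2 n j i \<omega>}
            \<ge> 1 - \<epsilon>) sequentially"
    and T_meas: "\<And>n i j. T n i j \<in> borel_measurable (M n)"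
    and mean: "\<And>n i j. 1 \<le> j \<Longrightarrow> j < i \<Longrightarrow> i \<le> p n \<Longrightarrow>
          prob_space.expectation (M n) (T n i j)
            = (if edge (P n) {1..p n} i j then mu1 n i j else mu0 n i j)"
    and c0_pos: "c0 > 0" and kappa_pos: "\<kappa> > 0"
    and sep: "\<And>n i j. 1 \<le> j \<Longrightarrow> j < i \<Longrightarrow> i \<le> p n \<Longrightarrow>
          mu1 n i j - mu0 n i j > c0 * real n powr (-\<kappa>)"
    and tail: "\<exists>\<delta> > 0. \<exists>c1 > 0. eventually (\<lambda>n. \<forall>i j. 1 \<le> j \<and> j < i \<and> i \<le> p n \<longrightarrow>
          measure (M n) {\<omega> \<in> space (M n).
              \<bar>T n i j \<omega> - prob_space.expectation (M n) (T n i j)\<bar> > c0 * real n powr (-\<kappa>) / 2}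
            \<le> exp (- c1 * real n powr \<delta>)) sequentially"
  shows "(\<lambda>n. measure (M n) {\<omega> \<in> space (M n). \<exists>i j. 1 \<le> j \<and> j < i \<and> i \<le> p n \<and>
            ((T n i j \<omega> > mu0 n i j + c0 * real n powr (-\<kappa>) / 2) \<noteq> edge (P n) {1..p n} i j)})
         \<longlonglongrightarrow> 0"
proof -
  obtain \<delta> c1 where "\<delta> > 0" "c1 > 0" and tail_bound: "eventually (\<lambda>n. \<forall>i j. 1 \<le> j \<and> j < i \<and> i \<le> p n \<longrightarrow>
      measure (M n) {\<omega> \<in> space (M n).
        \<bar>T n i j \<omega> - prob_space.expectation (M n) (T n i j)\<bar> > c0 * real n powr (-\<kappa>) / 2}
      \<le> exp (- c1 * real n powr \<delta>)) sequentially"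
    using tail by blast
  obtain a :: nat where "(\<lambda>n. real (p n)) \<in> O(\<lambda>n. real n ^ a)"
    using poly by blast
  then have "(\<lambda>n. real (p n) ^ 2) \<in> O(\<lambda>n. real n ^ (a * 2))"
    unfolding power_mult by (rule landau_o.big_power)
  then have decay: "(\<lambda>n. real (p n) ^ 2 * exp (- c1 * real n powr \<delta>)) \<longlonglongrightarrow> 0"
    using \<open>\<delta> > 0\<close> \<open>c1 > 0\<close> by (rule bigo_poly_mult_stretched_exp_tendsto_zero)
  let ?err = "\<lambda>n. {\<omega> \<in> space (M n). \<exists>i j. 1 \<le> j \<and> j < i \<and> i \<le> p n \<and>
      ((T n i j \<omega> > mu0 n i j + c0 * real n powr (-\<kappa>) / 2) \<noteq> edge (P n) {1..p n} i j)}"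
  have "eventually (\<lambda>n. measure (M n) (?err n) \<le> real (p n) ^ 2 * exp (- c1 * real n powr \<delta>))
      sequentially"
    using tail_bound
  proof eventually_elim
    case (elim n)
    interpret prob_space "M n" by (rule prob_M)
    let ?pairs = "SIGMA i:{1..p n}. {1..<i}"
    have "measure (M n) (?err n) = prob {\<omega> \<in> space (M n). \<exists>ij\<in>?pairs.
        (mu0 n (fst ij) (snd ij) + c0 * real n powr (-\<kappa>) / 2 < T n (fst ij) (snd ij) \<omega>)
          \<noteq> edge (P n) {1..p n} (fst ij) (snd ij)}"
      by (rule arg_cong[where f = "measure (M n)"]) force
    also have "\<dots> \<le> card ?pairs * exp (- c1 * real n powr \<delta>)"
      using elim sep mean T_meas
      by (intro threshold_tests_error_le[where T = "\<lambda>ij. T n (fst ij) (snd ij)"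
            and \<mu>\<^sub>1 = "\<lambda>ij. mu1 n (fst ij) (snd ij)"]) auto
    also have "\<dots> \<le> real (p n ^ 2) * exp (- c1 * real n powr \<delta>)"
      by (intro mult_right_mono of_nat_mono card_ordered_pairs_le) simp
    finally show ?case by simp
  qed
  then show ?thesis
    by (intro Lim_null_comparison[OF _ decay]) simp
qed

end
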